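(* Let $N=2$ with $Q=\{A,B\}$. Let $k\ge 5$, $\vec n=(n_1,\dots,n_k)$ a window string with $L\ge n_1\ge\cdots\ge n_k\ge1$, $\vec q\in Q^k$ and $\mu\in\{0,1\}^{k-1}$. Suppose $\vec n$ contains a "5-streak", i.e. there is an index $i$ with $3\le i\le k-2$ and $n_{i-2}=n_{i-1}=n_i=n_{i+1}=n_{i+2}$. Then there exist a window string $\vec n'$ of length $k-2$ obtained from $\vec n$ by deleting two of the entries $n_{i-2},\dots,n_{i+2}$, a qubit string $\vec q'\in Q^{k-2}$, a sign string $\mu'\in\{0,1\}^{k-3}$, and a scalar $c$ not depending on the unitaries $U_1,\dots,U_L$ nor on $\tilde O$, such that $$\mathbf{T}^{(k)}_{\vec q;\mu}(\vec n)=c\,\mathbf{T}^{(k-2)}_{\vec q';\mu'}(\vec n').$$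
   Context: Fix integers $L\ge 1$ and $N\ge 1$, and a set $Q$ of $N$ qubit labels. For $q\in Q$ let $\sigma_z^{[q]}$ denote the Pauli-$Z$ operator acting on qubit $q$ tensored with the identity on all other qubits of $(\mathbb{C}^2)^{\otimes N}$. (Digital control) Let $U_1,\dots,U_L$ be arbitrary unitaries on $(\mathbb{C}^2)^{\otimes N}$ ($U_n$ is the control propagator, constant on the $n$-th time window), and let $\tilde O$ be an arbitrary Hermitian unitary operator on $(\mathbb{C}^2)^{\otimes N}$ (the toggling-frame observable). For $q\in Q$ and $n\in\{1,\dots,L\}$ define $\tilde h_q(n)=U_n^\dagger\sigma_z^{[q]}U_n$ and $\bar h_q(n)=-\tilde O^{-1}\tilde h_q(n)\tilde O$. For $k\ge1$, a window string $\vec n=(n_1,\dots,n_k)$ with $L\ge n_1\ge\cdots\ge n_k\ge1$, a qubit string $\vec q=(q_1,\dots,q_k)\in Q^k$ and a sign string $\mu\in\{0,1\}^{k-1}$, the (window-framed) control tensor is $$\mathbf{T}^{(k)}_{\vec q;\mu}(\vec n)=\sum_{b\in\{0,1\}^k}(-1)^{\sum_{j=1}^{k-1}\mu_j b_{j+1}}\Big(\prod^{\downarrow}_{i:\,b_i=1}\bar h_{q_i}(n_i)\Big)\Big(\prod^{\uparrow}_{i:\,b_i=0}\tilde h_{q_i}(n_i)\Big),$$ where $\prod^{\downarrow}$ is the ordered product with the index $i$ decreasing from left to right, $\prod^{\uparrow}$ is the ordered product with $i$ increasing from left to right, and an empty product is the identity. When $N=1$ the qubit string is omitted and we write $\mathbf{T}^{(k)}_{\mu}(\vec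 n)$. *)

theory Defs
  imports "HOL-Analysis.Analysis"
begin

text \<open>Two-qubit operators: matrices indexed by computational basis states
  (bool \<times> bool); the first component is qubit A, the second qubit B;
  False = |0>, True = |1>.\<close>

type_synonym op2 = "complex ^ (bool \<times> bool) ^ (bool \<times> bool)"

datatype qubit = A | B

definition adj :: "op2 \<Rightarrow> op2" where
  "adj M = (\<chi> i j. cnj (M $ j $ i))"

definition unitary_op :: "op2 \<Rightarrow> bool" where
  "unitary_op U \<longleftrightarrow> adj U ** U = mat 1 \<and> U ** adj U = mat 1"

definition hermitian_op :: "op2 \<Rightarrow> bool" where
  "hermitian_op M \<longleftrightarrow> adj M = M"

definition smul_op :: "complex \<Rightarrow> op2 \<Rightarrow> op2" where
  "smul_op c M = (\<chi> i j. c * M $ i $ j)"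

definition sigma_z :: "qubit \<Rightarrow> op2" where
  "sigma_z q = (\<chi> i j. if i = j then
       (if (case q of A \<Rightarrow> fst i | B \<Rightarrow> snd i) then -1 else 1) else 0)"

definition prod_ops :: "op2 list \<Rightarrow> op2" where
  "prod_ops Ms = foldr (**) Ms (mat 1)"

definition htilde :: "(nat \<Rightarrow> op2) \<Rightarrow> qubit \<Rightarrow> nat \<Rightarrow> op2" where
  "htilde U q m = adj (U m) ** sigma_z q ** U m"

definition hbar :: "(nat \<Rightarrow> op2) \<Rightarrow> op2 \<Rightarrow> qubit \<Rightarrow> nat \<Rightarrow> op2" where
  "hbar U Ot q m = - (matrix_inv Ot ** htilde U q m ** Ot)"

definition window_string :: "nat \<Rightarrow> nat list \<Rightarrow> bool" where
  "window_string L ns \<longleftrightarrow> sorted_wrt (\<ge>) ns \<and> (\<forall>x\<in>set ns. 1 \<le> x \<and> x \<le> L)"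

text \<open>Control tensor T^(k)_{q;mu}(n), k = length ns; lists are 0-based, so the
  sign exponent sum_{j=1}^{k-1} mu_j b_{j+1} becomes sum_{j<k-1} mu!j * b!(j+1);
  True encodes 1.\<close>
definition control_tensor ::
  "(nat \<Rightarrow> op2) \<Rightarrow> op2 \<Rightarrow> nat list \<Rightarrow> qubit list \<Rightarrow> bool list \<Rightarrow> op2" where
  "control_tensor U Ot ns qs mu =
    (let k = length ns in
     \<Sum>b\<in>{b::bool list. length b = k}.
       smul_op ((-1) ^ card {j. j < k - 1 \<and> mu ! j \<and> b ! (j + 1)})
         (prod_ops [hbar U Ot (qs ! i) (ns ! i). i \<leftarrow> rev [0..<k], b ! i] **
          prod_ops [htilde U (qs ! i) (ns ! i). i \<leftarrow> [0..<k], \<not> b ! i]))"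

end

theory Submission
  imports Defs "HOL-Library.Multiset"
begin

text \<open>Expanding the sum over the last bit \<open>b\<^sub>k\<close> shows that the control tensor is built factor by
  factor, \<open>T\<^sub>k = \<phi>\<^sub>k T\<^sub>k\<^sub>-\<^sub>1\<close> with \<open>\<phi>\<^sub>j Y = \<plusminus>hbar\<^sub>j Y + Y htilde\<^sub>j\<close>, the sign being given by \<open>\<mu>\<close>.
  Within one window the maps \<open>\<phi>\<^sub>j\<close> commute, because the \<open>htilde\<^sub>q(n)\<close> (and the \<open>hbar\<^sub>q(n)\<close>) are
  simultaneous conjugates of commuting Pauli operators; and since all of them are involutions,
  \<open>\<phi>\<^sup>3 = 4\<phi>\<close>, while two maps with the same operators but opposite signs compose to zero.
  Among the five factors of a streak three act on the same qubit. If they carry the same sign,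
  two of them can be dropped at the price of the scalar 4; otherwise two of them with opposite
  signs annihilate each other and the tensor vanishes.\<close>

lemma matrix_add_rdistrib: "(P + Q) ** (R :: 'a::semiring_1 ^ 'n ^ 'm) = P ** R + Q ** R"
  by (simp add: vec_eq_iff matrix_matrix_mult_def distrib_right sum.distrib)

lemma matrix_neg_mul: "(- P) ** (R :: 'a::ring_1 ^ 'n ^ 'm) = - (P ** R)"
  by (simp add: vec_eq_iff matrix_matrix_mult_def sum_negf)

lemma matrix_mul_neg: "P ** (- R :: 'a::ring_1 ^ 'n ^ 'm) = - (P ** R)"
  by (simp add: vec_eq_iff matrix_matrix_mult_def sum_negf)

lemma matrix_mul_sum:
  "finite S \<Longrightarrow> M ** (\<Sum>b\<in>S. F b) = (\<Sum>b\<in>S. M ** (F b :: 'a::semiring_1 ^ 'n ^ 'm))"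
  by (induct S rule: finite_induct) (simp_all add: matrix_add_ldistrib)

lemma matrix_sum_mul:
  "finite S \<Longrightarrow> (\<Sum>b\<in>S. F b) ** (M :: 'a::semiring_1 ^ 'n ^ 'm) = (\<Sum>b\<in>S. F b ** M)"
  by (induct S rule: finite_induct) (simp_all add: matrix_add_rdistrib)

lemma smul_op_mult_right: "smul_op c (P ** Q) = P ** smul_op c Q"
  by (simp add: vec_eq_iff matrix_matrix_mult_def smul_op_def sum_distrib_left algebra_simps)

lemma smul_op_mult_left: "smul_op c (P ** Q) = smul_op c P ** Q"
  by (simp add: vec_eq_iff matrix_matrix_mult_def smul_op_def sum_distrib_left algebra_simps)

lemma smul_op_add: "smul_op c (P + Q) = smul_op c P + smul_op c Q"
  by (simp add: vec_eq_iff smul_op_def algebra_simps)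

lemma smul_op_minus: "smul_op c (- P) = - smul_op c P"
  by (simp add: vec_eq_iff smul_op_def)

lemma smul_op_minus_scalar: "smul_op (- c) P = - smul_op c P"
  by (simp add: vec_eq_iff smul_op_def)

lemma smul_op_one [simp]: "smul_op 1 P = P"
  by (simp add: vec_eq_iff smul_op_def)

lemma smul_op_zero_scalar [simp]: "smul_op 0 P = 0"
  by (simp add: vec_eq_iff smul_op_def)

lemma smul_op_four: "smul_op 4 P = P + P + P + P"
  by (simp add: vec_eq_iff smul_op_def)

lemma unitary_op_matrix_inv:
  assumes "unitary_op W"
  shows "matrix_inv W ** W = mat 1" "W ** matrix_inv W = mat 1"
proof -
  have "\<exists>W'. W ** W' = mat 1 \<and> W' ** W = mat 1"
    using assms unfolding unitary_op_def by blast
  then have "W ** matrix_inv W = mat 1 \<and> matrix_inv W ** W = mat 1"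
    unfolding matrix_inv_def by (rule someI_ex)
  then show "matrix_inv W ** W = mat 1" "W ** matrix_inv W = mat 1" by auto
qed

lemma sigma_z_square: "sigma_z q ** sigma_z q = mat 1"
  by (cases q) (auto simp: vec_eq_iff matrix_matrix_mult_def mat_def sigma_z_def UNIV_Times_UNIV[symmetric] UNIV_bool)

lemma sigma_z_commute: "sigma_z q ** sigma_z r = sigma_z r ** sigma_z q"
  by (cases q; cases r) (auto simp: vec_eq_iff matrix_matrix_mult_def mat_def sigma_z_def UNIV_Times_UNIV[symmetric] UNIV_bool)

lemma htilde_square: "unitary_op (U m) \<Longrightarrow> htilde U q m ** htilde U q m = mat 1"
  unfolding htilde_def unitary_op_def
  by (simp add: matrix_mul_assoc) (simp add: sigma_z_square flip: matrix_mul_assoc)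

lemma htilde_commute:
  "unitary_op (U m) \<Longrightarrow> htilde U q m ** htilde U r m = htilde U r m ** htilde U q m"
  unfolding htilde_def unitary_op_def
  by (simp add: matrix_mul_assoc) (simp add: sigma_z_commute flip: matrix_mul_assoc)

lemma hbar_mult:
  "unitary_op Ot \<Longrightarrow> hbar U Ot q m ** hbar U Ot r m = matrix_inv Ot ** (htilde U q m ** htilde U r m) ** Ot"
  unfolding hbar_def
  by (simp add: matrix_neg_mul matrix_mul_neg matrix_mul_assoc)
     (simp add: unitary_op_matrix_inv flip: matrix_mul_assoc)

lemma hbar_square: "unitary_op (U m) \<Longrightarrow> unitary_op Ot \<Longrightarrow> hbar U Ot q m ** hbar U Ot q m = mat 1"
  by (simp add: hbar_mult htilde_square unitary_op_matrix_inv)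

lemma hbar_commute:
  "unitary_op (U m) \<Longrightarrow> unitary_op Ot \<Longrightarrow> hbar U Ot q m ** hbar U Ot r m = hbar U Ot r m ** hbar U Ot q m"
  by (simp add: hbar_mult htilde_commute)

definition tensor_step :: "bool \<times> op2 \<times> op2 \<Rightarrow> op2 \<Rightarrow> op2" where
  "tensor_step x Y = (case x of (e, a, t) \<Rightarrow> (if e then - (a ** Y) else a ** Y) + Y ** t)"

lemma tensor_step_smul: "tensor_step x (smul_op c Y) = smul_op c (tensor_step x Y)"
  by (cases x) (auto simp: tensor_step_def smul_op_add smul_op_minus
                     simp flip: smul_op_mult_right smul_op_mult_left)

lemma fold_tensor_step_smul: "fold tensor_step xs (smul_op c Y) = smul_op c (fold tensor_step xs Y)"
  by (induct xs arbitrary: Y) (auto simp: tensor_step_smul)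

lemma fold_tensor_step_zero: "fold tensor_step xs 0 = 0"
  by (induct xs) (auto simp: tensor_step_def)

lemma tensor_step_commute:
  assumes "a1 ** a2 = a2 ** a1" "t1 ** t2 = t2 ** t1"
  shows "tensor_step (e1, a1, t1) \<circ> tensor_step (e2, a2, t2) = tensor_step (e2, a2, t2) \<circ> tensor_step (e1, a1, t1)"
proof -
  have swap: "a1 ** (a2 ** Z) = a2 ** (a1 ** Z)" "Z ** (t2 ** t1) = Z ** (t1 ** t2)" for Z
    by (simp_all add: matrix_mul_assoc assms)
  show ?thesis
    by (intro ext, cases e1; cases e2; simp only: swap tensor_step_def prod.case if_True if_False
          matrix_add_ldistrib matrix_add_rdistrib matrix_neg_mul matrix_mul_neg
          matrix_mul_assoc[symmetric] o_apply minus_minus; simp add: algebra_simps)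
qed

text \<open>For involutions \<open>a\<close>, \<open>t\<close> and \<open>\<phi> Y = \<plusminus>a Y + Y t\<close> one has \<open>\<phi>\<^sup>2 Y = 2 Y \<plusminus> 2 a Y t\<close>, and one more
  application of \<open>\<phi>\<close> turns the second term into \<open>2 \<phi> Y\<close>.\<close>

lemma tensor_step_cube:
  assumes "a ** a = mat 1" "t ** t = mat 1"
  shows "tensor_step (e, a, t) (tensor_step (e, a, t) (tensor_step (e, a, t) Y)) = smul_op 4 (tensor_step (e, a, t) Y)"
proof -
  have a_twice: "a ** (a ** Z) = Z" for Z
    by (simp add: matrix_mul_assoc assms)
  show ?thesis
    by (cases e; simp only: a_twice tensor_step_def prod.case if_True if_False matrix_add_ldistrib
          matrix_add_rdistrib matrix_neg_mul matrix_mul_neg matrix_mul_assoc[symmetric] assms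
          matrix_mul_rid minus_minus smul_op_four; simp add: algebra_simps)
qed

lemma tensor_step_annihilate:
  assumes "a ** a = mat 1" "t ** t = mat 1"
  shows "tensor_step (\<not> e, a, t) (tensor_step (e, a, t) Y) = 0"
proof -
  have a_twice: "a ** (a ** Z) = Z" for Z
    by (simp add: matrix_mul_assoc assms)
  show ?thesis
    by (cases e; simp only: a_twice tensor_step_def prod.case if_True if_False not_True_eq_False
          not_False_eq_True matrix_add_ldistrib matrix_add_rdistrib matrix_neg_mul matrix_mul_neg
          matrix_mul_assoc[symmetric] assms matrix_mul_rid minus_minus; simp add: algebra_simps)
qed

lemma prod_ops_Nil [simp]: "prod_ops [] = mat 1"
  by (simp add: prod_ops_def)

lemma prod_ops_Cons [simp]: "prod_ops (x # xs) = x ** prod_ops xs"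
  by (simp add: prod_ops_def)

lemma prod_ops_append [simp]: "prod_ops (xs @ ys) = prod_ops xs ** prod_ops ys"
  by (induct xs) (simp_all add: matrix_mul_assoc)

lemma bool_lists_length_Suc:
  "{b :: bool list. length b = Suc k} = (\<lambda>(b, \<beta>). b @ [\<beta>]) ` ({b. length b = k} \<times> UNIV)"
proof -
  have "b \<in> (\<lambda>(b, \<beta>). b @ [\<beta>]) ` ({b. length b = k} \<times> UNIV)" if "length b = Suc k" for b :: "bool list"
    using that by (cases b rule: rev_cases) auto
  then show ?thesis by auto
qed

lemma filter_nth_snoc_upt:
  assumes "length b = k"
  shows "filter (\<lambda>i. (b @ [\<beta>]) ! i) (rev [0..<Suc k]) = (if \<beta> then [k] else []) @ filter (\<lambda>i. b ! i) (rev [0..<k])"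
    and "filter (\<lambda>i. \<not> (b @ [\<beta>]) ! i) [0..<Suc k] = filter (\<lambda>i. \<not> b ! i) [0..<k] @ (if \<beta> then [] else [k])"
proof -
  have "filter (\<lambda>i. (b @ [\<beta>]) ! i) (rev [0..<k]) = filter (\<lambda>i. b ! i) (rev [0..<k])"
       "filter (\<lambda>i. \<not> (b @ [\<beta>]) ! i) [0..<k] = filter (\<lambda>i. \<not> b ! i) [0..<k]"
    by (auto intro: filter_cong simp: assms nth_append)
  then show "filter (\<lambda>i. (b @ [\<beta>]) ! i) (rev [0..<Suc k]) = (if \<beta> then [k] else []) @ filter (\<lambda>i. b ! i) (rev [0..<k])"
    and "filter (\<lambda>i. \<not> (b @ [\<beta>]) ! i) [0..<Suc k] = filter (\<lambda>i. \<not> b ! i) [0..<k] @ (if \<beta> then [] else [k])"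
    using assms by (cases \<beta>; simp add: nth_append)+
qed

lemma card_nth_snoc:
  assumes "length b = k"
  shows "card {j. j < Suc k \<and> e j \<and> (b @ [\<beta>]) ! j} = card {j. j < k \<and> e j \<and> b ! j} + (if e k \<and> \<beta> then 1 else 0)"
proof -
  have "{j. j < Suc k \<and> e j \<and> (b @ [\<beta>]) ! j} = {j. j < k \<and> e j \<and> b ! j} \<union> (if e k \<and> \<beta> then {k} else {})"
    using assms by (auto simp: nth_append less_Suc_eq)
  then show ?thesis by (auto simp: card_insert_if)
qed

text \<open>The terms with last bit \<open>\<beta> = True\<close> carry the \<open>k\<close>-th factor on the left (with its sign), those
  with \<open>\<beta> = False\<close> on the right.\<close>

lemma signed_product_sum_eq_fold:
  fixes a t :: "nat \<Rightarrow> op2" and e :: "nat \<Rightarrow> bool"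
  shows "(\<Sum>b\<in>{b :: bool list. length b = k}.
     smul_op ((-1) ^ card {j. j < k \<and> e j \<and> b ! j})
       (prod_ops (map a (filter (\<lambda>i. b ! i) (rev [0..<k]))) ** prod_ops (map t (filter (\<lambda>i. \<not> b ! i) [0..<k]))))
    = fold tensor_step (map (\<lambda>j. (e j, a j, t j)) [0..<k]) (mat 1)"
proof (induct k)
  case 0
  have "{b :: bool list. length b = 0} = {[]}" by auto
  then show ?case by simp
next
  case (Suc k)
  define summand where "summand k b = smul_op ((-1) ^ card {j. j < k \<and> e j \<and> b ! j})
       (prod_ops (map a (filter (\<lambda>i. b ! i) (rev [0..<k]))) ** prod_ops (map t (filter (\<lambda>i. \<not> b ! i) [0..<k])))"
    for k b
  have fin: "finite {b :: bool list. length b = k}"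
    using finite_lists_length_eq[of "UNIV :: bool set" k] by simp
  have inj: "inj_on (\<lambda>(b, \<beta>). b @ [\<beta>]) ({b :: bool list. length b = k} \<times> UNIV)"
    by (auto simp: inj_on_def)
  have left: "summand (Suc k) (b @ [True]) = (if e k then - (a k ** summand k b) else a k ** summand k b)"
    if "length b = k" for b
    unfolding summand_def filter_nth_snoc_upt[OF that] card_nth_snoc[OF that]
    by (simp add: smul_op_minus_scalar smul_op_mult_right matrix_mul_neg flip: matrix_mul_assoc)
  have right: "summand (Suc k) (b @ [False]) = summand k b ** t k" if "length b = k" for b
    unfolding summand_def filter_nth_snoc_upt[OF that] card_nth_snoc[OF that]
    by (simp add: matrix_mul_assoc smul_op_mult_left)
  have "(\<Sum>b | length b = Suc k. summand (Suc k) b) = (\<Sum>b | length b = k. \<Sum>\<beta>\<in>UNIV. summand (Suc k) (b @ [\<beta>]))"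
    unfolding bool_lists_length_Suc sum.reindex[OF inj] by (simp add: sum.cartesian_product split_def)
  also have "\<dots> = (\<Sum>b | length b = k. (if e k then - (a k ** summand k b) else a k ** summand k b) + summand k b ** t k)"
    by (rule sum.cong) (simp_all add: UNIV_bool left right add.commute)
  also have "\<dots> = tensor_step (e k, a k, t k) (\<Sum>b | length b = k. summand k b)"
    by (simp add: tensor_step_def sum.distrib sum_negf matrix_mul_sum[OF fin] matrix_sum_mul[OF fin])
  finally show ?case using Suc unfolding summand_def by simp
qed

text \<open>The sign flag of factor \<open>j\<close> is \<open>\<mu>\<^sub>j\<close> in the paper's 1-based indexing, i.e. \<open>mu ! (j - 1)\<close>;
  the first factor carries none, hence the \<open>False\<close> in front.\<close>

definition tensor_factor ::
  "(nat \<Rightarrow> op2) \<Rightarrow> op2 \<Rightarrow> nat list \<Rightarrow> qubit list \<Rightarrow> bool list \<Rightarrow> nat \<Rightarrow> bool \<times> op2 \<times> op2" where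
  "tensor_factor U Ot ns qs mu j =
     ((False # mu) ! j, hbar U Ot (qs ! j) (ns ! j), htilde U (qs ! j) (ns ! j))"

lemma list_comprehension_eq_map_filter: "[f x. x \<leftarrow> xs, P x] = map f (filter P xs)"
  by (induct xs) auto

lemma card_sign_shift:
  "card {j. j < k - 1 \<and> mu ! j \<and> b ! (j + 1)} = card {j. j < k \<and> (False # mu) ! j \<and> b ! j}"
proof -
  have "{j. j < k \<and> (False # mu) ! j \<and> b ! j} = Suc ` {j. j < k - 1 \<and> mu ! j \<and> b ! (j + 1)}"
    by (auto simp: image_iff nth_Cons gr0_conv_Suc split: nat.splits)
  then show ?thesis by (simp add: card_image)
qed

lemma control_tensor_eq_fold:
  "control_tensor U Ot ns qs mu = fold tensor_step (map (tensor_factor U Ot ns qs mu) [0..<length ns]) (mat 1)"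
  unfolding control_tensor_def Let_def list_comprehension_eq_map_filter card_sign_shift tensor_factor_def
  by (rule signed_product_sum_eq_fold)

lemma upt_split_block:
  assumes "s + m \<le> k"
  shows "[0..<k] = [0..<s] @ [s..<s + m] @ [s + m..<k]"
proof -
  have "[0..<k] = [0..<s + m] @ [s + m..<k]"
    using upt_add_eq_append[of 0 "s + m" "k - (s + m)"] assms by simp
  then show ?thesis
    using upt_add_eq_append[of 0 s m] by simp
qed

lemma filter_upt_split_block:
  assumes "s + m \<le> k" "\<And>j. j < s \<or> s + m \<le> j \<Longrightarrow> P j"
  shows "filter P [0..<k] = [0..<s] @ filter P [s..<s + m] @ [s + m..<k]"
  using assms by (subst upt_split_block[OF assms(1)]) (auto intro: filter_True)

lemma fold_map_perm:
  assumes "mset xs = mset ys" "set xs \<subseteq> S"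
    and "\<And>j j'. j \<in> S \<Longrightarrow> j' \<in> S \<Longrightarrow> f (it j) \<circ> f (it j') = f (it j') \<circ> f (it j)"
  shows "fold f (map it xs) = fold f (map it ys)"
  using assms by (intro fold_multiset_equiv) auto

lemma fold_tensor_step_repeated_factor:
  fixes it :: "nat \<Rightarrow> bool \<times> op2 \<times> op2"
  assumes commute: "\<And>x y. x \<in> {s..<s + m} \<Longrightarrow> y \<in> {s..<s + m} \<Longrightarrow>
      tensor_step (it x) \<circ> tensor_step (it y) = tensor_step (it y) \<circ> tensor_step (it x)"
    and block: "s + m \<le> k" "{i, j, l} \<subseteq> {s..<s + m}" "distinct [i, j, l]"
    and repeated: "it j = it i" "it l = it i"
    and cube: "\<And>Y. tensor_step (it i) (tensor_step (it i) (tensor_step (it i) Y)) =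
      smul_op 4 (tensor_step (it i) Y)"
  shows "fold tensor_step (map it [0..<k]) Y =
    smul_op 4 (fold tensor_step (map it (filter (\<lambda>x. x \<noteq> j \<and> x \<noteq> l) [0..<k])) Y)"
proof -
  define P where "P x \<longleftrightarrow> x \<noteq> j \<and> x \<noteq> l" for x
  define rest where "rest = filter (\<lambda>x. x \<notin> {i, j, l}) [s..<s + m]"
  have "mset [s..<s + m] = mset ([i, j, l] @ rest)"
    using block by (intro set_eq_iff_mset_eq_distinct[THEN iffD1]) (auto simp: rest_def)
  then have reorder: "fold tensor_step (map it [s..<s + m]) = fold tensor_step (map it ([i, j, l] @ rest))"
    by (rule fold_map_perm[where S = "{s..<s + m}"]) (auto simp: commute)
  have "mset (filter P [s..<s + m]) = mset (i # rest)"
    using block by (intro set_eq_iff_mset_eq_distinct[THEN iffD1]) (auto simp: rest_def P_def)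
  then have reorder_filtered:
    "fold tensor_step (map it (filter P [s..<s + m])) = fold tensor_step (map it (i # rest))"
    by (rule fold_map_perm[where S = "{s..<s + m}"]) (auto simp: commute)
  have block_fold: "fold tensor_step (map it [s..<s + m]) Z =
      smul_op 4 (fold tensor_step (map it (filter P [s..<s + m])) Z)" for Z
    by (simp add: reorder reorder_filtered repeated cube fold_tensor_step_smul)
  have "filter P [0..<k] = [0..<s] @ filter P [s..<s + m] @ [s + m..<k]"
    using block by (intro filter_upt_split_block) (auto simp: P_def)
  then show ?thesis
    unfolding P_def[symmetric] upt_split_block[OF block(1)]
    by (simp add: block_fold fold_tensor_step_smul)
qed

lemma fold_tensor_step_annihilating_pair:
  fixes it :: "nat \<Rightarrow> bool \<times> op2 \<times> op2"
  assumes commute: "\<And>x y. x \<in> {s..<s + m} \<Longrightarrow> y \<in> {s..<s + m} \<Longrightarrow>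
      tensor_step (it x) \<circ> tensor_step (it y) = tensor_step (it y) \<circ> tensor_step (it x)"
    and block: "s + m \<le> k" "{i, j} \<subseteq> {s..<s + m}" "i \<noteq> j"
    and annihilate: "\<And>Y. tensor_step (it j) (tensor_step (it i) Y) = 0"
  shows "fold tensor_step (map it [0..<k]) Y = 0"
proof -
  define rest where "rest = filter (\<lambda>x. x \<notin> {i, j}) [s..<s + m]"
  have "mset [s..<s + m] = mset ([i, j] @ rest)"
    using block by (intro set_eq_iff_mset_eq_distinct[THEN iffD1]) (auto simp: rest_def)
  then have "fold tensor_step (map it [s..<s + m]) = fold tensor_step (map it ([i, j] @ rest))"
    by (rule fold_map_perm[where S = "{s..<s + m}"]) (auto simp: commute)
  then have "fold tensor_step (map it [s..<s + m]) Z = 0" for Z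
    by (simp add: annihilate fold_tensor_step_zero)
  then show ?thesis
    unfolding upt_split_block[OF block(1)] by (simp add: fold_tensor_step_zero)
qed

definition remove_two :: "nat \<Rightarrow> nat \<Rightarrow> 'a list \<Rightarrow> 'a list" where
  "remove_two j1 j2 xs = [xs ! j. j \<leftarrow> [0..<length xs], j \<noteq> j1 \<and> j \<noteq> j2]"

lemma remove_two_eq_map_nth:
  "remove_two j1 j2 xs = map (nth xs) (filter (\<lambda>j. j \<noteq> j1 \<and> j \<noteq> j2) [0..<length xs])"
  by (simp add: remove_two_def list_comprehension_eq_map_filter)

lemma length_filter_upt_remove_two:
  assumes "j1 < j2" "j2 < k"
  shows "length (filter (\<lambda>j. j \<noteq> j1 \<and> j \<noteq> j2) [0..<k]) = k - 2"
proof -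
  have "length (filter (\<lambda>j. j \<noteq> j1 \<and> j \<noteq> j2) [0..<k]) = card ({0..<k} - {j1, j2})"
    by (subst distinct_card[symmetric]) (auto intro: arg_cong[where f = card])
  also have "\<dots> = k - 2"
    using assms by (subst card_Diff_subset) auto
  finally show ?thesis .
qed

lemma length_remove_two: "j1 < j2 \<Longrightarrow> j2 < length xs \<Longrightarrow> length (remove_two j1 j2 xs) = length xs - 2"
  by (simp add: remove_two_eq_map_nth length_filter_upt_remove_two)

lemma remove_two_Cons:
  assumes "0 < j1" "0 < j2"
  shows "remove_two j1 j2 (x # xs) = x # remove_two (j1 - 1) (j2 - 1) xs"
proof -
  have "[0..<Suc (length xs)] = 0 # map Suc [0..<length xs]"
    by (simp only: upt_conv_Cons[OF zero_less_Suc] map_Suc_upt)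
  moreover have "(\<lambda>j. j \<noteq> j1 \<and> j \<noteq> j2) \<circ> Suc = (\<lambda>j. j \<noteq> j1 - 1 \<and> j \<noteq> j2 - 1)"
    using assms by (auto simp: fun_eq_iff)
  ultimately show ?thesis
    using assms by (simp add: remove_two_eq_map_nth filter_map comp_def)
qed

text \<open>Since \<open>\<mu>\<close> only records the sign attached to each factor after the first, deleting the
  factors \<open>j1\<close> and \<open>j2\<close> deletes the entries \<open>j1 - 1\<close> and \<open>j2 - 1\<close> of \<open>\<mu>\<close>.\<close>

lemma tensor_factors_remove_two:
  assumes "0 < j1" "j1 < j2" "j2 < length ns"
    and "length qs = length ns" "length mu = length ns - 1"
  shows "map (tensor_factor U Ot (remove_two j1 j2 ns) (remove_two j1 j2 qs) (remove_two (j1 - 1) (j2 - 1) mu))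
      [0..<length ns - 2] =
    map (tensor_factor U Ot ns qs mu) (filter (\<lambda>j. j \<noteq> j1 \<and> j \<noteq> j2) [0..<length ns])"
proof -
  define idx where "idx = filter (\<lambda>j. j \<noteq> j1 \<and> j \<noteq> j2) [0..<length ns]"
  have length_idx: "length idx = length ns - 2"
    unfolding idx_def by (rule length_filter_upt_remove_two[OF assms(2,3)])
  have nth_remove: "remove_two j1 j2 ys ! m = ys ! (idx ! m)"
    if "length ys = length ns" "m < length ns - 2" for m and ys :: "'b list"
    using that length_idx by (simp add: remove_two_eq_map_nth idx_def)
  have nth_remove_signs: "(False # remove_two (j1 - 1) (j2 - 1) mu) ! m = (False # mu) ! (idx ! m)"
    if "m < length ns - 2" for m
    using assms that by (simp only: remove_two_Cons[symmetric]) (rule nth_remove; simp)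
  show ?thesis
    unfolding idx_def[symmetric]
  proof (rule nth_equalityI)
    fix m
    assume "m < length (map (tensor_factor U Ot (remove_two j1 j2 ns) (remove_two j1 j2 qs)
        (remove_two (j1 - 1) (j2 - 1) mu)) [0..<length ns - 2])"
    then have "m < length ns - 2" by simp
    then show "map (tensor_factor U Ot (remove_two j1 j2 ns) (remove_two j1 j2 qs)
        (remove_two (j1 - 1) (j2 - 1) mu)) [0..<length ns - 2] ! m = map (tensor_factor U Ot ns qs mu) idx ! m"
      using assms(4) length_idx
      by (simp add: tensor_factor_def nth_remove nth_remove_signs[simplified])
  qed (simp add: length_idx)
qed

lemma three_equal_among_five:
  fixes q :: "nat \<Rightarrow> qubit"
  obtains j0 j1 j2 where "s \<le> j0" "j0 < j1" "j1 < j2" "j2 < s + 5" "q j1 = q j0" "q j2 = q j0"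
proof -
  define triples :: "(nat \<times> nat \<times> nat) set" where "triples = {(0, 1, 2), (0, 1, 3), (0, 1, 4),
      (0, 2, 3), (0, 2, 4), (0, 3, 4), (1, 2, 3), (1, 2, 4), (1, 3, 4), (2, 3, 4)}"
  have "\<exists>(d0, d1, d2) \<in> triples. q (s + d1) = q (s + d0) \<and> q (s + d2) = q (s + d0)"
    unfolding triples_def
    by (cases "q s"; cases "q (s + 1)"; cases "q (s + 2)"; cases "q (s + 3)"; cases "q (s + 4)") auto
  then obtain d0 d1 d2 where "(d0, d1, d2) \<in> triples" "q (s + d1) = q (s + d0)" "q (s + d2) = q (s + d0)"
    by blast
  then show ?thesis
    by (intro that[of "s + d0" "s + d1" "s + d2"]) (auto simp: triples_def)
qed

lemma repeated_triple_or_sign_clash: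
  fixes q :: "nat \<Rightarrow> qubit" and e :: "nat \<Rightarrow> bool"
  obtains (triple) j0 j1 j2 where "s \<le> j0" "j0 < j1" "j1 < j2" "j2 < s + 5"
      "q j1 = q j0" "q j2 = q j0" "e j1 = e j0" "e j2 = e j0"
    | (clash) j1 j2 where "{j1, j2} \<subseteq> {s..<s + 5}" "q j2 = q j1" "e j2 = (\<not> e j1)"
proof -
  obtain j0 j1 j2 where j: "s \<le> j0" "j0 < j1" "j1 < j2" "j2 < s + 5" and q: "q j1 = q j0" "q j2 = q j0"
    by (rule three_equal_among_five)
  show ?thesis
  proof (cases "e j1 = e j0 \<and> e j2 = e j0")
    case True
    then show ?thesis by (intro triple[OF j q]) auto
  next
    case False
    then consider "e j1 = (\<not> e j0)" | "e j2 = (\<not> e j0)" by blast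
    then show ?thesis
    proof cases
      case 1
      then show ?thesis using j q by (intro clash[of j0 j1]) auto
    next
      case 2
      then show ?thesis using j q by (intro clash[of j0 j2]) auto
    qed
  qed
qed

lemma tensor_factors_commute:
  assumes "\<forall>j\<in>J. ns ! j = n" "unitary_op (U n)" "unitary_op Ot" "x \<in> J" "y \<in> J"
  shows "tensor_step (tensor_factor U Ot ns qs mu x) \<circ> tensor_step (tensor_factor U Ot ns qs mu y) =
    tensor_step (tensor_factor U Ot ns qs mu y) \<circ> tensor_step (tensor_factor U Ot ns qs mu x)"
  using assms by (simp add: tensor_factor_def tensor_step_commute hbar_commute htilde_commute)

lemma control_tensor_remove_two:
  assumes "0 < j1" "j1 < j2" "j2 < length ns" "length qs = length ns" "length mu = length ns - 1"
  shows "control_tensor U Ot (remove_two j1 j2 ns) (remove_two j1 j2 qs) (remove_two (j1 - 1) (j2 - 1) mu) =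
    fold tensor_step (map (tensor_factor U Ot ns qs mu) (filter (\<lambda>j. j \<noteq> j1 \<and> j \<noteq> j2) [0..<length ns])) (mat 1)"
  unfolding control_tensor_eq_fold length_remove_two[OF assms(2,3)] tensor_factors_remove_two[OF assms] ..

lemma control_tensor_repeated_factor:
  assumes lengths: "length qs = length ns" "length mu = length ns - 1"
    and streak: "s + m \<le> length ns" "\<forall>j\<in>{s..<s + m}. ns ! j = n"
    and unitary: "unitary_op (U n)" "unitary_op Ot"
    and j: "s \<le> j0" "j0 < j1" "j1 < j2" "j2 < s + m"
    and repeated: "qs ! j1 = qs ! j0" "qs ! j2 = qs ! j0"
      "(False # mu) ! j1 = (False # mu) ! j0" "(False # mu) ! j2 = (False # mu) ! j0"
  shows "control_tensor U Ot ns qs mu =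
    smul_op 4 (control_tensor U Ot (remove_two j1 j2 ns) (remove_two j1 j2 qs) (remove_two (j1 - 1) (j2 - 1) mu))"
proof -
  have "0 < j1" "j2 < length ns"
    using j streak(1) by auto
  note reduced = control_tensor_remove_two[OF this(1) j(3) this(2) lengths]
  have "fold tensor_step (map (tensor_factor U Ot ns qs mu) [0..<length ns]) (mat 1) =
      smul_op 4 (fold tensor_step (map (tensor_factor U Ot ns qs mu)
        (filter (\<lambda>j. j \<noteq> j1 \<and> j \<noteq> j2) [0..<length ns])) (mat 1))"
  proof (rule fold_tensor_step_repeated_factor[OF tensor_factors_commute[where U = U, OF streak(2) unitary], where i = j0])
    show "tensor_step (tensor_factor U Ot ns qs mu j0) (tensor_step (tensor_factor U Ot ns qs mu j0)
        (tensor_step (tensor_factor U Ot ns qs mu j0) Y)) = smul_op 4 (tensor_step (tensor_factor U Ot ns qs mu j0) Y)" for Y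
      using unitary j streak by (simp add: tensor_factor_def tensor_step_cube hbar_square htilde_square)
  qed (use j repeated streak in \<open>auto simp: tensor_factor_def\<close>)
  then show ?thesis
    by (simp only: reduced control_tensor_eq_fold[of U Ot ns qs mu])
qed

lemma control_tensor_sign_clash:
  assumes streak: "s + m \<le> length ns" "\<forall>j\<in>{s..<s + m}. ns ! j = n"
    and unitary: "unitary_op (U n)" "unitary_op Ot"
    and clash: "{j1, j2} \<subseteq> {s..<s + m}" "qs ! j2 = qs ! j1" "(False # mu) ! j2 = (\<not> (False # mu) ! j1)"
  shows "control_tensor U Ot ns qs mu = 0"
  unfolding control_tensor_eq_fold
proof (rule fold_tensor_step_annihilating_pair[OF tensor_factors_commute[where U = U, OF streak(2) unitary]])
  show "tensor_step (tensor_factor U Ot ns qs mu j2) (tensor_step (tensor_factor U Ot ns qs mu j1) Y) = 0" for Y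
    using unitary clash streak by (simp add: tensor_factor_def tensor_step_annihilate hbar_square htilde_square)
qed (use clash streak in auto)

lemma control_tensor_five_streak:
  assumes lengths: "length qs = length ns" "length mu = length ns - 1"
    and streak: "s + 5 \<le> length ns" "\<forall>j\<in>{s..<s + 5}. ns ! j = n"
  obtains j1 j2 c where "s \<le> j1" "0 < j1" "j1 < j2" "j2 < s + 5"
    "\<And>U Ot. unitary_op (U n) \<Longrightarrow> unitary_op Ot \<Longrightarrow> control_tensor U Ot ns qs mu =
      smul_op c (control_tensor U Ot (remove_two j1 j2 ns) (remove_two j1 j2 qs) (remove_two (j1 - 1) (j2 - 1) mu))"
proof (cases rule: repeated_triple_or_sign_clash[of s "nth qs" "nth (False # mu)"])
  case (triple j0 j1 j2)
  then show ?thesis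
    using control_tensor_repeated_factor[OF lengths streak _ _ triple] by (intro that[of j1 j2 4]) auto
next
  case (clash j1 j2)
  then show ?thesis
    using control_tensor_sign_clash[OF streak _ _ clash] by (intro that[of "s + 1" "s + 2" 0]) auto
qed

theorem proposition2:
  fixes L k i :: nat and ns :: "nat list" and qs :: "qubit list" and mu :: "bool list"
  assumes "L \<ge> 1" and "k \<ge> 5"
    and "length ns = k" and "window_string L ns"
    and "length qs = k" and "length mu = k - 1"
    and "2 \<le> i" and "i + 2 < k"
    and "\<forall>j\<in>{i - 2..i + 2}. ns ! j = ns ! i"
  shows "\<exists>ns' qs' mu' (c::complex).
           (\<exists>j1 j2. i - 2 \<le> j1 \<and> j1 < j2 \<and> j2 \<le> i + 2 \<and>
                    ns' = [ns ! j. j \<leftarrow> [0..<k], j \<noteq> j1 \<and> j \<noteq> j2]) \<and>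
           length qs' = k - 2 \<and> length mu' = k - 3 \<and>
           (\<forall>(U::nat \<Rightarrow> op2) (Ot::op2).
              (\<forall>m\<in>{1..L}. unitary_op (U m)) \<longrightarrow> hermitian_op Ot \<longrightarrow> unitary_op Ot \<longrightarrow>
              control_tensor U Ot ns qs mu = smul_op c (control_tensor U Ot ns' qs' mu'))"
proof -
  have "{i - 2..<i - 2 + 5} = {i - 2..i + 2}"
    using assms(7) by auto
  with assms(9) have streak: "\<forall>j\<in>{i - 2..<i - 2 + 5}. ns ! j = ns ! i"
    by (simp only:)
  have window: "ns ! i \<in> {1..L}"
    using assms(3,4,8) nth_mem[of i ns] by (simp add: window_string_def)
  have lengths: "length qs = length ns" "length mu = length ns - 1" "i - 2 + 5 \<le> length ns"
    using assms(3,5-8) by auto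
  obtain j1 j2 c where j: "i - 2 \<le> j1" "0 < j1" "j1 < j2" "j2 < i - 2 + 5"
    and reduction: "\<And>U Ot. unitary_op (U (ns ! i)) \<Longrightarrow> unitary_op Ot \<Longrightarrow> control_tensor U Ot ns qs mu =
      smul_op c (control_tensor U Ot (remove_two j1 j2 ns) (remove_two j1 j2 qs) (remove_two (j1 - 1) (j2 - 1) mu))"
    by (rule control_tensor_five_streak[OF lengths streak]) blast
  show ?thesis
  proof (intro exI[of _ "remove_two j1 j2 ns"] exI[of _ "remove_two j1 j2 qs"]
      exI[of _ "remove_two (j1 - 1) (j2 - 1) mu"] exI[of _ c] conjI allI impI)
    show "\<exists>j1' j2'. i - 2 \<le> j1' \<and> j1' < j2' \<and> j2' \<le> i + 2 \<and>
        remove_two j1 j2 ns = [ns ! j. j \<leftarrow> [0..<k], j \<noteq> j1' \<and> j \<noteq> j2']"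
      using j assms(3,7) by (intro exI[of _ j1] exI[of _ j2]) (simp add: remove_two_def)
    show "length (remove_two j1 j2 qs) = k - 2" "length (remove_two (j1 - 1) (j2 - 1) mu) = k - 3"
      using j lengths assms(3,5,6) by (simp_all add: length_remove_two)
    fix U Ot
    assume "\<forall>m\<in>{1..L}. unitary_op (U m)" "unitary_op Ot"
    with window show "control_tensor U Ot ns qs mu = smul_op c (control_tensor U Ot (remove_two j1 j2 ns)
        (remove_two j1 j2 qs) (remove_two (j1 - 1) (j2 - 1) mu))"
      by (intro reduction) auto
  qed
qed

end
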